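(* Let $n\ge 2$, $l\in\{1,\dots,n\}$ and $m=l(n-1)$. Among all simple directed graphs with $n$ vertices and $m$ arcs, the maximal algebraic connectivity is $l$, and it is achieved by any graph that is the union of $l$ simple $n$-vertex directed stars rooted at $l$ distinct vertices.
   Context: A simple directed graph has no self-arcs and no repeated arcs; an arc $(j,i)$ goes from $j$ to $i$. The (in-degree) Laplacian of $\mathbb G$ on vertices $\{1,\dots,n\}$ is $L(\mathbb G)=D-A$, $D$ the diagonal matrix of in-degrees, $A_{ij}=1$ if $(j,i)$ is an arc and $0$ otherwise. The algebraic connectivity is the second smallest real part among the $n$ eigenvalues of $L(\mathbb G)$ counted with algebraic multiplicity. The $n$-vertex directed star rooted at vertex $r$ is the graph on $\{1,\dots,n\}$ whose arcs are $(r,j)$ for all $j\ne r$. The union of graphs on the same vertex set is the graph on that vertex set whose arc set is the union of their arc sets. *)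

theory Defs
  imports "Jordan_Normal_Form.Char_Poly" "HOL-Computational_Algebra.Polynomial"
begin

text \<open>Vertices are 0,...,n-1; an arc (j,i) goes from j to i.\<close>

definition simple_digraph :: "nat \<Rightarrow> (nat \<times> nat) set \<Rightarrow> bool" where
  "simple_digraph n E \<longleftrightarrow> E \<subseteq> {0..<n} \<times> {0..<n} \<and> (\<forall>i. (i, i) \<notin> E)"

definition in_degree :: "(nat \<times> nat) set \<Rightarrow> nat \<Rightarrow> nat" where
  "in_degree E i = card {j. (j, i) \<in> E}"

definition laplacian :: "nat \<Rightarrow> (nat \<times> nat) set \<Rightarrow> complex mat" where
  "laplacian n E = mat n n (\<lambda>(i, j).
     (if i = j then of_nat (in_degree E i) else 0) - (if (j, i) \<in> E then 1 else 0))"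

definition lap_eigenvalues :: "nat \<Rightarrow> (nat \<times> nat) set \<Rightarrow> complex multiset" where
  "lap_eigenvalues n E = proots (char_poly (laplacian n E))"

definition algebraic_connectivity :: "nat \<Rightarrow> (nat \<times> nat) set \<Rightarrow> real" where
  "algebraic_connectivity n E =
     sorted_list_of_multiset (image_mset Re (lap_eigenvalues n E)) ! 1"

definition directed_star :: "nat \<Rightarrow> nat \<Rightarrow> (nat \<times> nat) set" where
  "directed_star n r = {(r, j) | j. j < n \<and> j \<noteq> r}"

end

theory Submission
  imports Defs "Jordan_Normal_Form.Schur_Decomposition"
begin

text \<open>
  The eigenvalues of the Laplacian, counted with multiplicity, sum to its trace, which is the
  number m of arcs (triangularise by Schur), and 0 is one of them (the all-ones vector is in
  the kernel). So if the second smallest real part a is positive, the n - 1 real parts other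
  than that of the eigenvalue 0 are all at least a, whence (n - 1) a \<le> m = l (n - 1).
  For the union of the stars rooted at R, with card R = l, the Laplacian acts as
  v \<mapsto> l v - (\<Sum>r\<in>R. v r) \<one>, so every eigenvalue is 0 or l; since they sum to l (n - 1),
  exactly one of them is 0 and the second smallest is l.
\<close>

definition mat_trace :: "'a::comm_ring_1 mat \<Rightarrow> 'a" where
  "mat_trace A = (\<Sum>i<dim_row A. A $$ (i, i))"

lemma mat_trace_mult_comm:
  assumes "A \<in> carrier_mat n n" "B \<in> carrier_mat n n"
  shows "mat_trace (A * B) = mat_trace (B * A)"
proof -
  have "mat_trace (A * B) = (\<Sum>i<n. \<Sum>k<n. A $$ (i, k) * B $$ (k, i))"
    using assms by (auto simp: mat_trace_def scalar_prod_def atLeast0LessThan)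
  also have "\<dots> = (\<Sum>k<n. \<Sum>i<n. B $$ (k, i) * A $$ (i, k))"
    by (subst sum.swap) (simp add: mult.commute)
  also have "\<dots> = mat_trace (B * A)"
    using assms by (auto simp: mat_trace_def scalar_prod_def atLeast0LessThan)
  finally show ?thesis .
qed

lemma mat_trace_similar_mat_wit:
  assumes "A \<in> carrier_mat n n" "similar_mat_wit A B P Q"
  shows "mat_trace A = mat_trace B"
proof -
  note wit = similar_mat_witD2[OF assms]
  have "mat_trace A = mat_trace (P * B * Q)" using wit by simp
  also have "\<dots> = mat_trace (Q * (P * B))"
    using wit by (intro mat_trace_mult_comm[of _ n]) auto
  also have "Q * (P * B) = B"
    using wit by (metis assoc_mult_mat left_mult_one_mat)
  finally show ?thesis .
qed

lemma proots_prod_linear_factors: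
  "proots (\<Prod>a\<leftarrow>as. [:- a, 1:]) = mset (as :: 'a::idom list)"
proof (induction as)
  case (Cons a as)
  have "(\<Prod>a\<leftarrow>as. [:- a, 1:]) \<noteq> 0"
    by (auto simp: prod_list_zero_iff)
  then show ?case
    using Cons proots_linear_factor[of "- a"]
    by (simp del: mult_pCons_left add: proots_mult add.commute)
qed simp

lemma size_proots_char_poly:
  assumes "(A :: complex mat) \<in> carrier_mat n n"
  shows "size (proots (char_poly A)) = n"
  using char_poly_factorized[OF assms] by (auto simp: proots_prod_linear_factors)

lemma sum_proots_char_poly:
  assumes A: "(A :: complex mat) \<in> carrier_mat n n"
  shows "sum_mset (proots (char_poly A)) = mat_trace A"
proof -
  obtain es where es: "char_poly A = (\<Prod>a\<leftarrow>es. [:- a, 1:])"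
    using char_poly_factorized[OF A] by blast
  obtain B P Q where "schur_decomposition A es = (B, P, Q)"
    by (cases "schur_decomposition A es") auto
  with schur_decomposition[OF A es]
  have "similar_mat_wit A B P Q" "diag_mat B = es" by auto
  then have "mat_trace A = sum_list es"
    using mat_trace_similar_mat_wit[OF A]
    by (auto simp: mat_trace_def diag_mat_def sum_list_sum_nth atLeast0LessThan)
  then show ?thesis by (simp add: es proots_prod_linear_factors sum_mset_sum_list)
qed

lemma mem_proots_char_poly_iff_eigenvalue:
  assumes A: "(A :: 'a::field mat) \<in> carrier_mat n n"
  shows "x \<in># proots (char_poly A) \<longleftrightarrow> eigenvalue A x"
proof -
  have "char_poly A \<noteq> 0"
    using degree_monic_char_poly[OF A] by auto
  then show ?thesis by (simp add: eigenvalue_root_char_poly[OF A])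
qed

lemma Re_sum_mset: "sum_mset (image_mset Re M) = Re (sum_mset M)"
  by (induction M) auto

lemma sorted_second_le_average:
  fixes xs :: "real list"
  assumes "sorted xs" "0 \<in> set xs" "2 \<le> length xs" "0 < xs ! 1"
  shows "real (length xs - 1) * xs ! 1 \<le> sum_list xs"
proof -
  obtain x y zs where xs: "xs = x # y # zs"
    using assms(3) by (cases xs; cases "tl xs") auto
  have "\<forall>z\<in>set zs. y \<le> z" "x \<le> y" using assms(1) xs by auto
  then have "x = 0" and zs: "real (length zs) * y \<le> sum_list zs"
    using assms(2,4) xs sum_list_mono[of zs "\<lambda>_. y" id] by (auto simp: sum_list_triv)
  then show ?thesis using xs by (simp add: algebra_simps)
qed

lemma sorted_two_valued_second:
  fixes xs :: "real list"
  assumes "sorted xs" "set xs \<subseteq> {0, c}" "0 \<le> c" "2 \<le> length xs"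
    and sum: "sum_list xs = c * real (length xs - 1)"
  shows "xs ! 1 = c"
proof (rule ccontr)
  assume "xs ! 1 \<noteq> c"
  obtain x y zs where xs: "xs = x # y # zs"
    using assms(4) by (cases xs; cases "tl xs") auto
  have "y = 0" "x \<le> y" using \<open>xs ! 1 \<noteq> c\<close> assms(1,2) xs by auto
  then have "x = 0" using assms(2,3) xs by auto
  have "\<forall>z\<in>set zs. z \<le> c" using assms(2,3) xs by auto
  then have "sum_list zs \<le> real (length zs) * c"
    using sum_list_mono[of zs id "\<lambda>_. c"] by (auto simp: sum_list_triv)
  then have "c * real (length zs + 1) \<le> c * real (length zs)"
    using sum xs \<open>x = 0\<close> \<open>y = 0\<close> by (simp add: mult.commute)
  then have "c = 0" using assms(3) by (simp add: algebra_simps)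
  with \<open>xs ! 1 \<noteq> c\<close> \<open>y = 0\<close> xs show False by simp
qed

lemma laplacian_carrier [simp]: "laplacian n E \<in> carrier_mat n n"
  and dim_row_laplacian [simp]: "dim_row (laplacian n E) = n"
  and dim_col_laplacian [simp]: "dim_col (laplacian n E) = n"
  by (simp_all add: laplacian_def)

lemma in_neighbours_subset:
  "simple_digraph n E \<Longrightarrow> {j. (j, i) \<in> E} \<subseteq> {0..<n} - {i}"
  by (auto simp: simple_digraph_def)

lemma laplacian_mult_vec_nth:
  assumes "simple_digraph n E" "i < n" "v \<in> carrier_vec n"
  shows "(laplacian n E *\<^sub>v v) $ i = (\<Sum>j | (j, i) \<in> E. v $ i - v $ j)"
proof -
  let ?N = "{j. (j, i) \<in> E}"
  have N: "?N \<subseteq> {0..<n} - {i}" using in_neighbours_subset[OF assms(1)] .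
  have "(laplacian n E *\<^sub>v v) $ i = (\<Sum>j\<in>{0..<n}. laplacian n E $$ (i, j) * v $ j)"
    using assms(2,3) by (auto simp: scalar_prod_def intro!: sum.cong)
  also have "\<dots> = (\<Sum>j\<in>{0..<n}. (if j = i then of_nat (in_degree E i) * v $ i else 0)
      - (if j \<in> ?N then v $ j else 0))"
    using assms(2) N by (intro sum.cong) (auto simp: laplacian_def)
  also have "\<dots> = of_nat (card ?N) * v $ i - (\<Sum>j\<in>?N. v $ j)"
  proof -
    have "{j\<in>{0..<n}. (j, i) \<in> E} = ?N" using N by auto
    then show ?thesis
      using assms(2) by (simp add: sum_subtractf in_degree_def flip: sum.inter_filter)
  qed
  also have "\<dots> = (\<Sum>j\<in>?N. v $ i - v $ j)"
    by (simp add: sum_subtractf)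
  finally show ?thesis .
qed

lemma sum_in_degree:
  assumes "simple_digraph n E"
  shows "(\<Sum>i<n. in_degree E i) = card E"
proof -
  have E: "E = prod.swap ` (SIGMA i:{..<n}. {j. (j, i) \<in> E})"
    using assms by (force simp: simple_digraph_def)
  have "finite {j. (j, i) \<in> E}" for i
    using in_neighbours_subset[OF assms] by (rule finite_subset) simp
  then show ?thesis
    by (subst E) (simp add: card_image card_SigmaI in_degree_def)
qed

lemma mat_trace_laplacian:
  assumes "simple_digraph n E"
  shows "mat_trace (laplacian n E) = of_nat (card E)"
  using sum_in_degree[OF assms] assms
  by (auto simp: mat_trace_def laplacian_def simple_digraph_def simp flip: of_nat_sum)

lemma eigenvalue_laplacian_zero:
  assumes "simple_digraph n E" "0 < n"
  shows "eigenvalue (laplacian n E) 0"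
proof -
  let ?one = "vec n (\<lambda>_. 1) :: complex vec"
  have "(laplacian n E *\<^sub>v ?one) $ i = 0" if "i < n" for i
    using in_neighbours_subset[OF assms(1), of i] that
    by (subst laplacian_mult_vec_nth[OF assms(1) that]) (auto intro!: sum.neutral)
  then have "laplacian n E *\<^sub>v ?one = 0 \<cdot>\<^sub>v ?one"
    by (intro eq_vecI) auto
  moreover have "?one \<noteq> 0\<^sub>v n"
    using assms(2) by (metis index_vec index_zero_vec(1) zero_neq_one)
  ultimately show ?thesis
    by (auto simp: eigenvalue_def eigenvector_def intro!: exI[of _ ?one])
qed

definition re_spectrum :: "nat \<Rightarrow> (nat \<times> nat) set \<Rightarrow> real list" where
  "re_spectrum n E = sorted_list_of_multiset (image_mset Re (lap_eigenvalues n E))"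

lemma algebraic_connectivity_re_spectrum:
  "algebraic_connectivity n E = re_spectrum n E ! 1"
  by (simp add: algebraic_connectivity_def re_spectrum_def)

lemma sorted_re_spectrum: "sorted (re_spectrum n E)"
  by (simp add: re_spectrum_def)

lemma length_re_spectrum: "length (re_spectrum n E) = n"
  by (metis re_spectrum_def lap_eigenvalues_def laplacian_carrier mset_sorted_list_of_multiset
      size_image_mset size_mset size_proots_char_poly)

lemma set_re_spectrum:
  "set (re_spectrum n E) = Re ` {x. eigenvalue (laplacian n E) x}"
proof -
  have "set_mset (lap_eigenvalues n E) = {x. eigenvalue (laplacian n E) x}"
    by (auto simp: lap_eigenvalues_def mem_proots_char_poly_iff_eigenvalue[OF laplacian_carrier])
  then show ?thesis by (simp add: re_spectrum_def)
qed

lemma sum_list_re_spectrum: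
  assumes "simple_digraph n E"
  shows "sum_list (re_spectrum n E) = real (card E)"
proof -
  have "sum_list (re_spectrum n E) = Re (sum_mset (lap_eigenvalues n E))"
    by (simp add: re_spectrum_def sum_mset_sum_list [symmetric] Re_sum_mset)
  then show ?thesis
    by (simp add: lap_eigenvalues_def sum_proots_char_poly[OF laplacian_carrier]
        mat_trace_laplacian[OF assms])
qed

lemma algebraic_connectivity_le:
  assumes "simple_digraph n E" "2 \<le> n"
  shows "algebraic_connectivity n E * (real n - 1) \<le> real (card E)"
proof (cases "algebraic_connectivity n E \<le> 0")
  case True
  then have "algebraic_connectivity n E * (real n - 1) \<le> 0"
    using assms(2) by (intro mult_nonpos_nonneg) auto
  then show ?thesis by simp
next
  case False
  have "eigenvalue (laplacian n E) 0"
    using eigenvalue_laplacian_zero[OF assms(1)] assms(2) by simp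
  then have "0 \<in> set (re_spectrum n E)" by (force simp: set_re_spectrum)
  with False show ?thesis
    using sorted_second_le_average[of "re_spectrum n E"] assms
    by (simp add: algebraic_connectivity_re_spectrum sorted_re_spectrum length_re_spectrum
        sum_list_re_spectrum of_nat_diff mult.commute)
qed

lemma simple_digraph_star_union:
  "R \<subseteq> {0..<n} \<Longrightarrow> simple_digraph n (\<Union>r\<in>R. directed_star n r)"
  by (auto simp: simple_digraph_def directed_star_def)

lemma card_star_union:
  assumes "R \<subseteq> {0..<n}"
  shows "card (\<Union>r\<in>R. directed_star n r) = card R * (n - 1)"
proof -
  have star: "directed_star n r = Pair r ` ({0..<n} - {r})" for r
    by (auto simp: directed_star_def)
  have "finite R" using assms finite_subset by blast
  then have "card (\<Union>r\<in>R. directed_star n r) = (\<Sum>r\<in>R. card (directed_star n r))"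
    by (intro card_UN_disjoint) (auto simp: star)
  also have "\<dots> = (\<Sum>r\<in>R. n - 1)"
    using assms by (intro sum.cong) (auto simp: star card_image inj_on_def)
  finally show ?thesis by simp
qed

lemma eigenvalue_laplacian_star_union:
  assumes R: "R \<subseteq> {0..<n}" and ev: "eigenvalue (laplacian n (\<Union>r\<in>R. directed_star n r)) x"
  shows "x = 0 \<or> x = of_nat (card R)"
proof -
  let ?E = "\<Union>r\<in>R. directed_star n r"
  obtain v where v: "v \<in> carrier_vec n" "v \<noteq> 0\<^sub>v n" "laplacian n ?E *\<^sub>v v = x \<cdot>\<^sub>v v"
    using ev by (auto simp: eigenvalue_def eigenvector_def)
  have "finite R" using R finite_subset by blast
  define s where "s = (\<Sum>r\<in>R. v $ r)"
  have eq: "x * v $ i = of_nat (card R) * v $ i - s" if "i < n" for i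
  proof -
    have "{j. (j, i) \<in> ?E} = R - {i}"
      using R that by (auto simp: directed_star_def)
    then have "x * v $ i = (\<Sum>j\<in>R - {i}. v $ i - v $ j)"
      using v that laplacian_mult_vec_nth[OF simple_digraph_star_union[OF R] that v(1)]
      by (metis index_smult_vec(1) carrier_vecD)
    also have "\<dots> = (\<Sum>j\<in>R. v $ i - v $ j)"
      using \<open>finite R\<close> by (simp add: sum_diff1)
    finally show ?thesis by (simp add: sum_subtractf s_def)
  qed
  have "x * s = (\<Sum>r\<in>R. of_nat (card R) * v $ r - s)"
    using R eq by (auto simp: s_def sum_distrib_left intro!: sum.cong)
  then have "x = 0 \<or> s = 0" by (simp add: sum_subtractf s_def sum_distrib_left[symmetric])
  moreover obtain i where "i < n" "v $ i \<noteq> 0"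
    using v(1,2) by (metis carrier_vecD eq_vecI index_zero_vec)
  ultimately show ?thesis using eq by force
qed

lemma algebraic_connectivity_star_union:
  assumes "R \<subseteq> {0..<n}" "2 \<le> n"
  shows "algebraic_connectivity n (\<Union>r\<in>R. directed_star n r) = real (card R)"
proof -
  let ?E = "\<Union>r\<in>R. directed_star n r"
  have "set (re_spectrum n ?E) \<subseteq> {0, real (card R)}"
    using eigenvalue_laplacian_star_union[OF assms(1)] by (force simp: set_re_spectrum)
  then show ?thesis
    using sorted_two_valued_second[of "re_spectrum n ?E" "real (card R)"] assms
    by (simp add: algebraic_connectivity_re_spectrum sorted_re_spectrum length_re_spectrum
        sum_list_re_spectrum simple_digraph_star_union card_star_union)
qed

theorem theorem3:
  fixes n l m :: nat
  assumes "n \<ge> 2" and "1 \<le> l" and "l \<le> n" and "m = l * (n - 1)"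
  shows "(\<forall>E. simple_digraph n E \<and> card E = m \<longrightarrow> algebraic_connectivity n E \<le> real l)
       \<and> (\<forall>R. R \<subseteq> {0..<n} \<and> card R = l \<longrightarrow>
            (let E = (\<Union>r\<in>R. directed_star n r) in
               simple_digraph n E \<and> card E = m \<and> algebraic_connectivity n E = real l))"
proof (intro conjI allI impI)
  fix E assume "simple_digraph n E \<and> card E = m"
  then have "algebraic_connectivity n E * (real n - 1) \<le> real l * (real n - 1)"
    using algebraic_connectivity_le[of n E] assms by (simp add: of_nat_diff)
  then show "algebraic_connectivity n E \<le> real l"
    using assms(1) by simp
next
  fix R assume "R \<subseteq> {0..<n} \<and> card R = l"
  then show "let E = \<Union>r\<in>R. directed_star n r in
      simple_digraph n E \<and> card E = m \<and> algebraic_connectivity n E = real l"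
    using assms by (simp add: simple_digraph_star_union card_star_union
        algebraic_connectivity_star_union)
qed

end
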